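(* Let $f\in C[0,1]$ (complex-valued), $u\in(0,1]$ and $\rho>0$. If $f(u)\neq0$, then there exist a constant $d>0$ and a sequence $\{\rho_k\}_{k\ge1}$ with $\rho_k\to+\infty$ such that $|\Phi_{f,u}(\rho_k)|>\rho e^{d\rho_k}$ for all $k\ge1$.
   Context: For $f\in C[0,1]$ and $u\in(0,1]$, $\Phi_{f,u}(z)=\int_0^u f(s)e^{(u-s)z}\,ds$ ($z\in\mathbb{C}$). *)

theory Defs
  imports "HOL-Analysis.Analysis"
begin

definition Phi :: "(real \<Rightarrow> complex) \<Rightarrow> real \<Rightarrow> complex \<Rightarrow> complex" where
  "Phi f u z = integral {0..u} (\<lambda>s. f s * exp (complex_of_real (u - s) * z))"

end

theory Submission imports Defs "HOL-Real_Asymp.Real_Asymp" begin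

text \<open>If the conclusion failed, then for every \<open>d > 0\<close> eventually
  \<open>|Phi f u x| \<le> \<rho> exp (d x)\<close>. Fix \<open>0 < \<tau> \<le> u\<close> and put \<open>d = \<tau>/2\<close>. Expanding
  \<open>exp (-w) - 1\<close> with \<open>w = exp (t (u - \<tau> - s))\<close> as a power series in \<open>w\<close> writes
  \<open>\<integral>\<^sub>0\<^sup>u f(s) (exp (-w) - 1) ds\<close> as \<open>\<Sum>\<^sub>k\<^sub>\<ge>\<^sub>1 (-1)\<^sup>k exp (-k t \<tau>) / k! Phi f u (k t)\<close>, so the
  growth bound makes it at most \<open>\<rho> (exp (exp (t (d - \<tau>))) - 1)\<close>, which tends to \<open>0\<close>
  as \<open>t \<rightarrow> \<infinity>\<close>. On the other hand \<open>exp (-w) - 1\<close> tends to \<open>-1\<close> for \<open>s < u - \<tau>\<close> and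
  to \<open>0\<close> for \<open>s > u - \<tau>\<close>, so by dominated convergence the same integral tends to
  \<open>-\<integral>\<^sub>0\<^sup>u\<^sup>-\<^sup>\<tau> f\<close>. Hence every primitive \<open>\<integral>\<^sub>0\<^sup>a f\<close> with \<open>a < u\<close> vanishes, so \<open>f = 0\<close>
  on \<open>[0, u]\<close>, contradicting \<open>f u \<noteq> 0\<close>.\<close>

lemma exp_minus_one_sums:
  fixes x :: "'a::{real_normed_algebra_1,banach}"
  shows "(\<lambda>k. x ^ Suc k /\<^sub>R fact (Suc k)) sums (exp x - 1)"
  by (subst sums_Suc_iff) (use exp_converges[of x] in simp)

lemma sum_exp_minus_one_le:
  fixes x :: real
  assumes "0 \<le> x"
  shows "(\<Sum>k<M. x ^ Suc k /\<^sub>R fact (Suc k)) \<le> exp x - 1"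
proof -
  have "(\<Sum>k<M. x ^ Suc k /\<^sub>R fact (Suc k)) \<le> (\<Sum>k. x ^ Suc k /\<^sub>R fact (Suc k))"
    by (rule sum_le_suminf[OF sums_summable[OF exp_minus_one_sums]]) (use assms in auto)
  then show ?thesis
    by (simp only: sums_unique[OF exp_minus_one_sums, symmetric])
qed

lemma abs_sum_exp_minus_one_le:
  fixes x :: real
  shows "\<bar>\<Sum>k<M. x ^ Suc k /\<^sub>R fact (Suc k)\<bar> \<le> exp \<bar>x\<bar> - 1"
proof -
  have "\<bar>\<Sum>k<M. x ^ Suc k /\<^sub>R fact (Suc k)\<bar> \<le> (\<Sum>k<M. \<bar>x ^ Suc k /\<^sub>R fact (Suc k)\<bar>)"
    by (rule sum_abs)
  also have "\<dots> = (\<Sum>k<M. \<bar>x\<bar> ^ Suc k /\<^sub>R fact (Suc k))"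
    by (simp add: abs_mult power_abs)
  also have "\<dots> \<le> exp \<bar>x\<bar> - 1"
    by (rule sum_exp_minus_one_le) simp
  finally show ?thesis .
qed

lemma exp_exp_cutoff_tendsto:
  fixes a s :: real
  shows "(\<lambda>n::nat. exp (- exp (real n * (a - s))) - 1) \<longlonglongrightarrow>
           (if s < a then -1 else if s = a then exp (-1) - 1 else 0)"
proof -
  consider "0 < a - s" | "a = s" | "a - s < 0" by linarith
  then show ?thesis
  proof cases
    case 1
    then show ?thesis by simp real_asymp
  next
    case 3
    then show ?thesis by simp real_asymp
  qed simp
qed

lemma integral_exp_exp_cutoff_tendsto:
  fixes f :: "real \<Rightarrow> complex"
  assumes cont: "continuous_on {0..u} f" and a: "0 \<le> a" "a \<le> u"
  shows "(\<lambda>n::nat. integral {0..u} (\<lambda>s. f s * of_real (exp (- exp (real n * (a - s))) - 1)))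
           \<longlonglongrightarrow> - integral {0..a} f"
proof -
  define g where
    "g s = f s * of_real (if s < a then -1 else if s = a then exp (-1) - 1 else 0)" for s
  have "(\<lambda>n. integral {0..u} (\<lambda>s. f s * of_real (exp (- exp (real n * (a - s))) - 1)))
          \<longlonglongrightarrow> integral {0..u} g"
  proof (rule dominated_convergence(2)[where h = "\<lambda>s. norm (f s)"])
    show "(\<lambda>s. f s * of_real (exp (- exp (real n * (a - s))) - 1)) integrable_on {0..u}" for n
      by (rule integrable_continuous_interval) (intro continuous_intros cont)
    show "(\<lambda>s. norm (f s)) integrable_on {0..u}"
      by (rule integrable_continuous_interval) (intro continuous_intros cont)
    show "norm (f s * of_real (exp (- exp (real n * (a - s))) - 1)) \<le> norm (f s)" for n s
    proof -
      have "\<bar>exp (- exp (real n * (a - s))) - 1\<bar> \<le> 1"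
        by (simp add: abs_if)
      then show ?thesis
        unfolding norm_mult norm_of_real by (simp add: mult_left_le)
    qed
    show "(\<lambda>n. f s * of_real (exp (- exp (real n * (a - s))) - 1)) \<longlonglongrightarrow> g s" for s
      unfolding g_def by (intro tendsto_intros exp_exp_cutoff_tendsto)
  qed
  moreover have "integral {0..u} g = - integral {0..a} f"
  proof -
    have "integral {0..u} g = integral {0..u} (\<lambda>s. - (if s \<in> {..a} then f s else 0))"
      by (rule integral_spike[of "{a}"]) (auto simp: g_def)
    also have "\<dots> = - integral ({..a} \<inter> {0..u}) f"
      by (simp only: integral_neg integral_restrict_Int)
    also have "{..a} \<inter> {0..u} = {0..a}"
      using a by auto
    finally show ?thesis .
  qed
  ultimately show ?thesis
    by simp
qed

definition cutoff_coeff :: "real \<Rightarrow> real \<Rightarrow> nat \<Rightarrow> real" where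
  "cutoff_coeff t \<tau> k = (-1) ^ Suc k * exp (- (real (Suc k) * t * \<tau>)) / fact (Suc k)"

lemma power_minus_exp_cutoff_eq:
  fixes t \<tau> u s :: real
  shows "(- exp (t * (u - \<tau> - s))) ^ Suc k /\<^sub>R fact (Suc k) =
           cutoff_coeff t \<tau> k * exp ((u - s) * (Suc k * t))"
proof -
  have "(- exp (t * (u - \<tau> - s))) ^ Suc k = (-1) ^ Suc k * exp (t * (u - \<tau> - s)) ^ Suc k"
    by (rule power_minus)
  also have "exp (t * (u - \<tau> - s)) ^ Suc k = exp (Suc k * (t * (u - \<tau> - s)))"
    by (rule exp_of_nat_mult[symmetric])
  also have "\<dots> = exp (- (Suc k * t * \<tau>)) * exp ((u - s) * (Suc k * t))"
    by (simp only: exp_add[symmetric]) (simp add: algebra_simps)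
  finally show ?thesis
    by (simp only: cutoff_coeff_def real_scaleR_def divide_inverse mult_ac)
qed

lemma integral_partial_cutoff_eq_sum_Phi:
  fixes f :: "real \<Rightarrow> complex" and t \<tau> :: real
  assumes cont: "continuous_on {0..u} f"
  shows "integral {0..u}
           (\<lambda>s. f s * of_real (\<Sum>k<M. (- exp (t * (u - \<tau> - s))) ^ Suc k /\<^sub>R fact (Suc k))) =
         (\<Sum>k<M. of_real (cutoff_coeff t \<tau> k) * Phi f u (of_real (Suc k * t)))"
proof -
  have summand: "f s * of_real ((- exp (t * (u - \<tau> - s))) ^ Suc k /\<^sub>R fact (Suc k)) =
      of_real (cutoff_coeff t \<tau> k) * (f s * exp (of_real (u - s) * of_real (Suc k * t)))" for s k
    by (simp only: power_minus_exp_cutoff_eq of_real_mult exp_of_real[symmetric] mult_ac)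
  have "integral {0..u}
          (\<lambda>s. f s * of_real (\<Sum>k<M. (- exp (t * (u - \<tau> - s))) ^ Suc k /\<^sub>R fact (Suc k))) =
        integral {0..u} (\<lambda>s. \<Sum>k<M. of_real (cutoff_coeff t \<tau> k)
          * (f s * exp (of_real (u - s) * of_real (Suc k * t))))"
    by (simp only: of_real_sum sum_distrib_left summand)
  also have "\<dots> = (\<Sum>k<M. integral {0..u} (\<lambda>s. of_real (cutoff_coeff t \<tau> k)
                    * (f s * exp (of_real (u - s) * of_real (Suc k * t)))))"
    by (rule integral_sum[OF finite_lessThan]) (intro integrable_continuous_interval continuous_intros cont)
  also have "\<dots> = (\<Sum>k<M. of_real (cutoff_coeff t \<tau> k) * Phi f u (of_real (Suc k * t)))"
    by (simp only: integral_mult_right Phi_def)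
  finally show ?thesis .
qed

lemma norm_cutoff_coeff_Phi_le:
  fixes f :: "real \<Rightarrow> complex" and t \<tau> d \<rho> X :: real
  assumes \<rho>: "0 \<le> \<rho>" and t: "0 \<le> t" "X \<le> t"
    and growth: "\<And>x. X \<le> x \<Longrightarrow> cmod (Phi f u (of_real x)) \<le> \<rho> * exp (d * x)"
  shows "cmod (of_real (cutoff_coeff t \<tau> k) * Phi f u (of_real (Suc k * t)))
           \<le> \<rho> * (exp (t * (d - \<tau>)) ^ Suc k /\<^sub>R fact (Suc k))"
proof -
  have "X \<le> Suc k * t"
    using t mult_le_cancel_right1[of t "Suc k"] by simp
  have power_eq: "exp (t * (d - \<tau>)) ^ Suc k = exp (- (Suc k * t * \<tau>)) * exp (d * (Suc k * t))"
    unfolding exp_of_nat_mult[symmetric] exp_add[symmetric] by (simp add: algebra_simps)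
  have "cmod (of_real (cutoff_coeff t \<tau> k) * Phi f u (of_real (Suc k * t)))
      = exp (- (Suc k * t * \<tau>)) / fact (Suc k) * cmod (Phi f u (of_real (Suc k * t)))"
    unfolding norm_mult norm_of_real cutoff_coeff_def by (simp add: abs_mult power_abs)
  also have "\<dots> \<le> exp (- (Suc k * t * \<tau>)) / fact (Suc k) * (\<rho> * exp (d * (Suc k * t)))"
    by (intro mult_left_mono growth \<open>X \<le> Suc k * t\<close>) simp
  also have "\<dots> = \<rho> * (exp (t * (d - \<tau>)) ^ Suc k /\<^sub>R fact (Suc k))"
    by (simp only: power_eq real_scaleR_def divide_inverse mult_ac)
  finally show ?thesis .
qed

lemma norm_integral_partial_cutoff_le:
  fixes f :: "real \<Rightarrow> complex" and t \<tau> d \<rho> X :: real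
  assumes cont: "continuous_on {0..u} f" and \<rho>: "0 \<le> \<rho>" and t: "0 \<le> t" "X \<le> t"
    and growth: "\<And>x. X \<le> x \<Longrightarrow> cmod (Phi f u (of_real x)) \<le> \<rho> * exp (d * x)"
  shows "cmod (integral {0..u}
           (\<lambda>s. f s * of_real (\<Sum>k<M. (- exp (t * (u - \<tau> - s))) ^ Suc k /\<^sub>R fact (Suc k))))
           \<le> \<rho> * (exp (exp (t * (d - \<tau>))) - 1)"
proof -
  have "cmod (integral {0..u}
           (\<lambda>s. f s * of_real (\<Sum>k<M. (- exp (t * (u - \<tau> - s))) ^ Suc k /\<^sub>R fact (Suc k))))
        \<le> (\<Sum>k<M. cmod (of_real (cutoff_coeff t \<tau> k) * Phi f u (of_real (Suc k * t))))"
    unfolding integral_partial_cutoff_eq_sum_Phi[OF cont] by (rule norm_sum)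
  also have "\<dots> \<le> (\<Sum>k<M. \<rho> * (exp (t * (d - \<tau>)) ^ Suc k /\<^sub>R fact (Suc k)))"
    by (intro sum_mono norm_cutoff_coeff_Phi_le[OF \<rho> t growth])
  also have "\<dots> = \<rho> * (\<Sum>k<M. exp (t * (d - \<tau>)) ^ Suc k /\<^sub>R fact (Suc k))"
    by (simp only: sum_distrib_left)
  also have "\<dots> \<le> \<rho> * (exp (exp (t * (d - \<tau>))) - 1)"
    using \<rho> by (intro mult_left_mono sum_exp_minus_one_le) simp_all
  finally show ?thesis .
qed

lemma norm_integral_exp_exp_cutoff_le:
  fixes f :: "real \<Rightarrow> complex" and t \<tau> d \<rho> X :: real
  assumes cont: "continuous_on {0..u} f" and \<rho>: "0 \<le> \<rho>" and t: "0 \<le> t" "X \<le> t"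
    and growth: "\<And>x. X \<le> x \<Longrightarrow> cmod (Phi f u (of_real x)) \<le> \<rho> * exp (d * x)"
  shows "cmod (integral {0..u} (\<lambda>s. f s * of_real (exp (- exp (t * (u - \<tau> - s))) - 1)))
           \<le> \<rho> * (exp (exp (t * (d - \<tau>))) - 1)"
proof -
  define P where "P M s = (\<Sum>k<M. (- exp (t * (u - \<tau> - s))) ^ Suc k /\<^sub>R fact (Suc k))" for M s
  have "(\<lambda>M. integral {0..u} (\<lambda>s. f s * of_real (P M s))) \<longlonglongrightarrow>
          integral {0..u} (\<lambda>s. f s * of_real (exp (- exp (t * (u - \<tau> - s))) - 1))"
  proof (rule dominated_convergence(2)[where h = "\<lambda>s. norm (f s) * (exp (exp (t * (u - \<tau> - s))) - 1)"])
    show "(\<lambda>s. f s * of_real (P M s)) integrable_on {0..u}" for M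
      unfolding P_def by (rule integrable_continuous_interval) (intro continuous_intros cont)
    show "(\<lambda>s. norm (f s) * (exp (exp (t * (u - \<tau> - s))) - 1)) integrable_on {0..u}"
      by (rule integrable_continuous_interval) (intro continuous_intros cont)
    show "norm (f s * of_real (P M s)) \<le> norm (f s) * (exp (exp (t * (u - \<tau> - s))) - 1)" for M s
      unfolding norm_mult norm_of_real P_def
      using abs_sum_exp_minus_one_le[of "- exp (t * (u - \<tau> - s))" M]
      by (intro mult_left_mono) auto
    show "(\<lambda>M. f s * of_real (P M s)) \<longlonglongrightarrow> f s * of_real (exp (- exp (t * (u - \<tau> - s))) - 1)" for s
      unfolding P_def using exp_minus_one_sums[unfolded sums_def]
      by (intro tendsto_intros)
  qed
  then show ?thesis
    unfolding P_def
    by (rule LIMSEQ_le_const2[OF tendsto_norm])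
       (use norm_integral_partial_cutoff_le[OF cont \<rho> t growth] in blast)
qed

lemma integral_eq_0_if_Phi_subexponential:
  fixes f :: "real \<Rightarrow> complex"
  assumes cont: "continuous_on {0..u} f" and \<rho>: "0 \<le> \<rho>"
    and growth: "\<And>d. 0 < d \<Longrightarrow> \<forall>\<^sub>F x in at_top. cmod (Phi f u (of_real x)) \<le> \<rho> * exp (d * x)"
    and a: "0 \<le> a" "a < u"
  shows "integral {0..a} f = 0"
proof -
  define \<tau> where "\<tau> = u - a"
  have \<tau>: "0 < \<tau>" "a = u - \<tau>"
    using a by (auto simp: \<tau>_def)
  obtain X where X: "\<And>x. X \<le> x \<Longrightarrow> cmod (Phi f u (of_real x)) \<le> \<rho> * exp (\<tau> / 2 * x)"
    using growth[of "\<tau> / 2"] \<tau> by (auto simp: eventually_at_top_linorder)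
  define I where
    "I n = integral {0..u} (\<lambda>s. f s * of_real (exp (- exp (real n * (a - s))) - 1))" for n :: nat
  have "\<forall>\<^sub>F n in sequentially. norm (I n) \<le> \<rho> * (exp (exp (real n * (\<tau> / 2 - \<tau>))) - 1)"
  proof (rule eventually_sequentiallyI[of "nat \<lceil>X\<rceil>"])
    fix n :: nat
    assume "nat \<lceil>X\<rceil> \<le> n"
    then have "X \<le> real n"
      by linarith
    then show "norm (I n) \<le> \<rho> * (exp (exp (real n * (\<tau> / 2 - \<tau>))) - 1)"
      unfolding I_def \<tau>(2) by (intro norm_integral_exp_exp_cutoff_le[OF cont \<rho> _ _ X]) simp_all
  qed
  moreover have "(\<lambda>n::nat. \<rho> * (exp (exp (real n * (\<tau> / 2 - \<tau>))) - 1)) \<longlonglongrightarrow> 0"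
    using \<tau>(1) by real_asymp
  ultimately have "I \<longlonglongrightarrow> 0"
    by (rule Lim_null_comparison)
  moreover have "I \<longlonglongrightarrow> - integral {0..a} f"
    unfolding I_def using cont a by (intro integral_exp_exp_cutoff_tendsto) simp_all
  ultimately show ?thesis
    using LIMSEQ_unique by fastforce
qed

lemma vanishing_primitive_imp_zero:
  fixes f :: "real \<Rightarrow> 'a::banach"
  assumes cont: "continuous_on {0..u} f" and u: "0 < u"
    and primitive: "\<And>a. 0 \<le> a \<Longrightarrow> a < u \<Longrightarrow> integral {0..a} f = 0"
    and x: "x \<in> {0..u}"
  shows "f x = 0"
proof -
  have "f y = 0" if y: "y \<in> {0<..<u}" for y
  proof -
    define c where "c = (y + u) / 2"
    have c: "0 < y" "y < c" "c < u"
      using y by (auto simp: c_def)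
    have "((\<lambda>t. integral {0..t} f) has_vector_derivative f y) (at y within {0..c})"
      by (rule integral_has_vector_derivative) (use cont c in \<open>auto intro: continuous_on_subset\<close>)
    then have "((\<lambda>t. 0) has_vector_derivative f y) (at y within {0..c})"
      by (rule has_vector_derivative_transform_within[where d = 1]) (use c primitive in auto)
    moreover have "((\<lambda>t. 0) has_vector_derivative 0) (at y within {0..c})"
      by (rule derivative_intros)
    ultimately show ?thesis
      by (intro vector_derivative_unique_within_closed_interval[of 0 c y "\<lambda>t. 0"]) (use c in auto)
  qed
  moreover have "closure {0<..<u} = {0..u}"
    using u by simp
  ultimately show ?thesis
    using continuous_constant_on_closure[of "{0<..<u}" f 0 x] cont x by simp
qed

lemma frequently_at_top_imp_seq:
  fixes P :: "real \<Rightarrow> bool"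
  assumes "\<exists>\<^sub>F x in at_top. P x"
  shows "\<exists>r :: nat \<Rightarrow> real. filterlim r at_top sequentially \<and> (\<forall>k. P (r k))"
proof -
  have "\<forall>k::nat. \<exists>x. real k \<le> x \<and> P x"
    using assms by (auto simp: frequently_def eventually_at_top_linorder)
  then obtain r where r: "\<And>k. real k \<le> r k \<and> P (r k)"
    by metis
  have "filterlim r at_top sequentially"
    by (rule filterlim_at_top_mono[OF filterlim_real_sequentially]) (use r in auto)
  with r show ?thesis
    by blast
qed

theorem lemma4p6:
  fixes f :: "real \<Rightarrow> complex" and u \<rho> :: real
  assumes "continuous_on {0..1} f"
    and "0 < u" and "u \<le> 1"
    and "0 < \<rho>"
    and "f u \<noteq> 0"
  shows "\<exists>d > 0. \<exists>r :: nat \<Rightarrow> real. filterlim r at_top sequentially \<and>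
           (\<forall>k. cmod (Phi f u (complex_of_real (r k))) > \<rho> * exp (d * r k))"
proof (rule ccontr)
  assume no_seq: "\<not> ?thesis"
  have cont: "continuous_on {0..u} f"
    using assms(1) by (rule continuous_on_subset) (use assms(3) in auto)
  have growth: "\<forall>\<^sub>F x in at_top. cmod (Phi f u (of_real x)) \<le> \<rho> * exp (d * x)" if "0 < d" for d
  proof (rule ccontr)
    assume "\<not> (\<forall>\<^sub>F x in at_top. cmod (Phi f u (of_real x)) \<le> \<rho> * exp (d * x))"
    then have "\<exists>\<^sub>F x in at_top. \<rho> * exp (d * x) < cmod (Phi f u (of_real x))"
      by (simp add: not_eventually not_le)
    with frequently_at_top_imp_seq no_seq that show False
      by blast
  qed
  have "f u = 0"
    using integral_eq_0_if_Phi_subexponential[OF cont _ growth] assms(2,4)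
    by (intro vanishing_primitive_imp_zero[OF cont]) auto
  with assms(5) show False
    by contradiction
qed

end
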